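(* Consider the two-sided market model described in the context with $\phi(x)=x^\theta$ for some $0<\theta<1$, and CP cost parameter $a>\zeta$. Let $S_{NN}(a)=\mathcal S(y_0)$ be the social welfare under net neutrality (all consumers and all CPs participate) and $S_{RM}(a)=\mathcal S(y^*(a))$ the social welfare under ISP revenue maximization, where $y^*(a)$ solves $g(y^* )=a$. Then there exists a unique $\bar a>\zeta$ such that for $\zeta<a<\bar a$ net neutrality yields higher social welfare than revenue maximization ($S_{NN}(a)>S_{RM}(a)$), while for $a>\bar a$ revenue maximization yields higher social welfare ($S_{RM}(a)>S_{NN}(a)$).
   Context: Model: fix $\gamma>2$, $\beta>2$, $\lambda>0$. Consumer types have density $x^{-\gamma}$ on $x\ge x_0:=(\frac{1}{\gamma-1})^{\frac{1}{\gamma-1}}$, CP types density $y^{-\beta}$ on $y\ge y_0:=(\frac{1}{\beta-1})^{\frac{1}{\beta-1}}$. Let $Y(s)=\int_s^\infty y^{1-\beta}dy$, $\bar X=\int_{x_0}^\infty x^{1-\gamma}dx$, $\bar Y=Y(y_0)$. With all consumers participating and CPs of type $\ge y$ participating, the social welfare (for CP cost parameter $a$) is $\mathcal S(y)=\int_{x_0}^\infty\phi(x\sqrt{\bar YY(y)})x^{-\gamma}dx+\lambda\bar X\sqrt{\bar YY(y)}-aY(y)$. The revenue-maximizing ISP (charging a membership fee and a CP fee that make threshold types indifferent) excludes all consumers below $x_0$ and CPs below $y^*$, where $y^*$ solves $g(y^* )=a$ with $g(y)=\frac12\big(\frac{\gamma-2}{\gamma-1}\phi'(x_0\sqrt{\bar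 Y Y(y)})+\lambda\big)\frac{\bar X\sqrt{\bar Y}}{\sqrt{Y(y)}}$ (increasing in $y$). Also $\zeta=\max\{\frac{1}{2}(\frac{\gamma-2}{\gamma-1}\phi'(\bar Yx_0)+\lambda)\bar X,\ \frac{1}{2}(\int_{x_0}^{\infty}\phi'(x\bar Y)x^{1-\gamma}dx+\lambda \bar X)\}$; for $a>\zeta$ net neutrality is not socially optimal. *)

theory Defs
  imports "HOL-Analysis.Analysis"
begin

text \<open>Two-sided market model. Parameters: gam (\<gamma>), bet (\<beta>), lam (\<lambda>), th (\<theta>),
  CP cost parameter a. Integrals over unbounded intervals are Henstock-Kurzweil integrals.\<close>

definition phi :: "real \<Rightarrow> real \<Rightarrow> real" where
  "phi th x = x powr th"

definition phi' :: "real \<Rightarrow> real \<Rightarrow> real" where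
  "phi' th x = th * x powr (th - 1)"

definition x0 :: "real \<Rightarrow> real" where
  "x0 gam = (1 / (gam - 1)) powr (1 / (gam - 1))"

definition y0 :: "real \<Rightarrow> real" where
  "y0 bet = (1 / (bet - 1)) powr (1 / (bet - 1))"

definition Yf :: "real \<Rightarrow> real \<Rightarrow> real" where
  "Yf bet s = integral {s..} (\<lambda>y. y powr (1 - bet))"

definition Xbar :: "real \<Rightarrow> real" where
  "Xbar gam = integral {x0 gam..} (\<lambda>x. x powr (1 - gam))"

definition Ybar :: "real \<Rightarrow> real" where
  "Ybar bet = Yf bet (y0 bet)"

text \<open>Social welfare when all consumers and CPs of type \<ge> y participate.\<close>
definition welfare :: "real \<Rightarrow> real \<Rightarrow> real \<Rightarrow> real \<Rightarrow> real \<Rightarrow> real \<Rightarrow> real" where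
  "welfare gam bet lam th a y =
     integral {x0 gam..} (\<lambda>x. phi th (x * sqrt (Ybar bet * Yf bet y)) * x powr (- gam))
     + lam * Xbar gam * sqrt (Ybar bet * Yf bet y) - a * Yf bet y"

definition gfun :: "real \<Rightarrow> real \<Rightarrow> real \<Rightarrow> real \<Rightarrow> real \<Rightarrow> real" where
  "gfun gam bet lam th y =
     1/2 * ((gam - 2) / (gam - 1) * phi' th (x0 gam * sqrt (Ybar bet * Yf bet y)) + lam)
       * (Xbar gam * sqrt (Ybar bet) / sqrt (Yf bet y))"

definition zeta :: "real \<Rightarrow> real \<Rightarrow> real \<Rightarrow> real \<Rightarrow> real" where
  "zeta gam bet lam th = max
     (1/2 * ((gam - 2) / (gam - 1) * phi' th (Ybar bet * x0 gam) + lam) * Xbar gam)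
     (1/2 * (integral {x0 gam..} (\<lambda>x. phi' th (x * Ybar bet) * x powr (1 - gam)) + lam * Xbar gam))"

definition ystar :: "real \<Rightarrow> real \<Rightarrow> real \<Rightarrow> real \<Rightarrow> real \<Rightarrow> real" where
  "ystar gam bet lam th a = (THE y. y0 bet \<le> y \<and> gfun gam bet lam th y = a)"

definition S_NN :: "real \<Rightarrow> real \<Rightarrow> real \<Rightarrow> real \<Rightarrow> real \<Rightarrow> real" where
  "S_NN gam bet lam th a = welfare gam bet lam th a (y0 bet)"

definition S_RM :: "real \<Rightarrow> real \<Rightarrow> real \<Rightarrow> real \<Rightarrow> real \<Rightarrow> real" where
  "S_RM gam bet lam th a = welfare gam bet lam th a (ystar gam bet lam th a)"

end

theory Submission
  imports Defs
begin

text \<open>Substituting t = sqrt (Y(y) / Ybar), which decreases from 1 to 0 as the CP threshold y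
  grows, turns all model quantities into elementary functions of t: with p1, p2 > 0 and
  e = theta/2, welfare is p1 t^(2e) + p2 t - a Ybar t^2, the threshold condition g(y*) = a
  reads G(t) = Ybar a for a strictly decreasing G (reduced_g), and S_NN - S_RM becomes
  D(t) = p1 (1 - t^(2e)) + p2 (1 - t) - G(t) (1 - t^2) (reduced_gap).
  Moreover D(t) = (1-t)^2/(2t) (p1 R(t) - p2) with R (gap_ratio) strictly increasing on (0,1),
  so D changes sign exactly once, from negative to positive, at some t0. As a and t correspond
  through the decreasing G, the threshold is abar = G(t0) / Ybar; Young's inequality gives
  D > 0 wherever G(t) \<le> e p1 + p2/2 = Ybar zeta, which places abar above zeta.\<close>

section \<open>Monotonicity of the gap ratio\<close>

text \<open>The derivative of gap_ratio has the sign of (1+t) t^2 - t^(2e) psi_poly, i.e. of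
  1 - psi. The derivative of psi has the numerator t^(2e) t psi_deriv_poly, which is positive,
  so psi increases on (0,1] to psi 1 = 1.\<close>

definition psi_poly :: "real \<Rightarrow> real \<Rightarrow> real \<Rightarrow> real" where
  "psi_poly e r t = (1+t)*t^2 + r*e*(1+t)*(1-t^2) - 2*e*(1-t)*(r*(1-e) - t^2*(1-r*e))"

definition psi_poly' :: "real \<Rightarrow> real \<Rightarrow> real \<Rightarrow> real" where
  "psi_poly' e r t = 2*t + 3*t^2 + r*e*(1-2*t-3*t^2) + 2*e*(r*(1-e) - t^2*(1-r*e))
     + 4*e*t*(1-t)*(1-r*e)"

definition psi_deriv_poly :: "real \<Rightarrow> real \<Rightarrow> real \<Rightarrow> real" where
  "psi_deriv_poly e r t = 2*e*((1-r)*((1+2*e)*t^2 + (1-2*e)*t^4) + r*(1-2*e)*(1-e)*(1-t^2)^2)"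

definition psi :: "real \<Rightarrow> real \<Rightarrow> real \<Rightarrow> real" where
  "psi e r t = t powr (2*e) * psi_poly e r t / ((1+t)*t^2)"

definition gap_ratio :: "real \<Rightarrow> real \<Rightarrow> real \<Rightarrow> real" where
  "gap_ratio e r t = 2*(t^2 - t powr (2*e)*(t^2 + r*e*(1-t^2)))/(t*(1-t)^2)"

lemma psi_deriv_poly_pos:
  assumes "0 < e" "e < 1/2" "0 < r" "r < 1" "0 < t"
  shows "psi_deriv_poly e r t > 0"
proof -
  have "(1-r)*((1+2*e)*t^2 + (1-2*e)*t^4) > 0"
    using assms by (intro mult_pos_pos add_pos_pos) auto
  moreover have "r*(1-2*e)*(1-e)*(1-t^2)^2 \<ge> 0"
    using assms by simp
  ultimately show ?thesis
    unfolding psi_deriv_poly_def using assms by (intro mult_pos_pos add_pos_nonneg) auto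
qed

lemma has_real_derivative_powr_div:
  "t > 0 \<Longrightarrow> ((\<lambda>t. t powr c) has_real_derivative c * t powr c / t) (at t)"
  using has_real_derivative_powr[of t c] by (simp add: powr_diff)

lemma has_real_derivative_psi_poly: "(psi_poly e r has_real_derivative psi_poly' e r t) (at t)"
  unfolding psi_poly_def psi_poly'_def
  by (rule derivative_eq_intros refl)+ (simp add: algebra_simps power2_eq_square)

lemma has_real_derivative_psi:
  assumes "0 < t"
  shows "(psi e r has_real_derivative
           t powr (2*e) * t * psi_deriv_poly e r t / ((1+t)*t^2)^2) (at t)"
proof -
  let ?q = "t powr (2*e)" and ?P = "psi_poly e r t" and ?P' = "psi_poly' e r t"
  have den: "((\<lambda>t. (1+t)*t^2) has_real_derivative 2*t + 3*t^2) (at t)"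
    by (rule derivative_eq_intros refl)+ (simp add: algebra_simps power2_eq_square)
  have "(psi e r has_real_derivative
          ((2*e * ?q / t * ?P + ?P' * ?q) * ((1+t)*t^2) - ?q * ?P * (2*t + 3*t^2))
          / ((1+t)*t^2 * ((1+t)*t^2))) (at t)"
    unfolding psi_def
    using DERIV_divide[OF DERIV_mult[OF has_real_derivative_powr_div has_real_derivative_psi_poly] den]
      assms by simp
  moreover have "(2*e * ?q / t * ?P + ?P' * ?q) * ((1+t)*t^2) - ?q * ?P * (2*t + 3*t^2)
                 = ?q * (2*e * ?P * (1+t) * t + ?P' * ((1+t)*t^2) - ?P * (2*t + 3*t^2))"
    using assms by (simp add: field_simps power2_eq_square)
  moreover have "2*e * ?P * (1+t) * t + ?P' * ((1+t)*t^2) - ?P * (2*t + 3*t^2)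
                   = t * psi_deriv_poly e r t"
    unfolding psi_poly_def psi_poly'_def psi_deriv_poly_def by algebra
  ultimately show ?thesis
    by (simp add: power2_eq_square mult.assoc)
qed

lemma psi_lt_1:
  assumes "0 < e" "e < 1/2" "0 < r" "r < 1" "0 < t" "t < 1"
  shows "psi e r t < 1"
proof -
  have "psi e r t < psi e r 1"
  proof (rule DERIV_pos_imp_increasing[OF \<open>t < 1\<close>])
    fix x assume "t \<le> x" "x \<le> 1"
    with assms have "x > 0" by linarith
    then have "x powr (2*e) * x * psi_deriv_poly e r x / ((1+x)*x^2)^2 > 0"
      using psi_deriv_poly_pos[OF assms(1-4)] by simp
    then show "\<exists>y. DERIV (psi e r) x :> y \<and> y > 0"
      using has_real_derivative_psi[OF \<open>x > 0\<close>] by blast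
  qed
  also have "psi e r 1 = 1"
    unfolding psi_def psi_poly_def by simp
  finally show ?thesis .
qed

lemma has_real_derivative_gap_ratio:
  assumes "0 < t" "t < 1"
  shows "(gap_ratio e r has_real_derivative
           2 * ((1+t)*t^2 - t powr (2*e) * psi_poly e r t) * (1-t) / (t*(1-t)^2)^2) (at t)"
proof -
  let ?q = "t powr (2*e)" and ?P = "t^2 + r*e*(1-t^2)"
  have num: "((\<lambda>t. 2*(t^2 - t powr (2*e)*(t^2 + r*e*(1-t^2)))) has_real_derivative
               2*(2*t - (2*e * ?q / t * ?P + ?q * (2*t - 2*r*e*t)))) (at t)"
    by (rule derivative_eq_intros has_real_derivative_powr_div assms refl)+
      (simp add: algebra_simps)
  have den: "((\<lambda>t. t*(1-t)^2) has_real_derivative (1-t)^2 - 2*t*(1-t)) (at t)"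
    by (rule derivative_eq_intros refl)+ (simp add: algebra_simps power2_eq_square)
  have "(gap_ratio e r has_real_derivative
          (2*(2*t - (2*e * ?q / t * ?P + ?q * (2*t - 2*r*e*t))) * (t*(1-t)^2)
            - 2*(t^2 - ?q * ?P) * ((1-t)^2 - 2*t*(1-t))) / (t*(1-t)^2 * (t*(1-t)^2))) (at t)"
    unfolding gap_ratio_def using DERIV_divide[OF num den] assms by simp
  moreover have "2*(2*t - (2*e * ?q / t * ?P + ?q * (2*t - 2*r*e*t))) * (t*(1-t)^2)
            - 2*(t^2 - ?q * ?P) * ((1-t)^2 - 2*t*(1-t))
         = 2*(2*t - ?q * (2*t - 2*r*e*t)) * (t*(1-t)^2) - 4*e * ?q * ?P * (1-t)^2
            - 2*(t^2 - ?q * ?P) * ((1-t)^2 - 2*t*(1-t))"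
    using assms by (simp add: field_simps power2_eq_square)
  moreover have "\<dots> = 2 * ((1+t)*t^2 - ?q * psi_poly e r t) * (1-t)"
    unfolding psi_poly_def by algebra
  ultimately show ?thesis
    by (simp add: power2_eq_square)
qed

lemma gap_ratio_strict_mono:
  assumes "0 < e" "e < 1/2" "0 < r" "r < 1" "0 < s" "s < t" "t < 1"
  shows "gap_ratio e r s < gap_ratio e r t"
proof (rule DERIV_pos_imp_increasing[OF \<open>s < t\<close>])
  fix x assume "s \<le> x" "x \<le> t"
  with assms have x: "0 < x" "x < 1" by linarith+
  have "psi e r x < 1"
    using psi_lt_1[OF assms(1-4) x] .
  then have "x powr (2*e) * psi_poly e r x < (1+x)*x^2"
    using x unfolding psi_def by (simp add: divide_less_eq)
  then have "2 * ((1+x)*x^2 - x powr (2*e) * psi_poly e r x) * (1-x) / (x*(1-x)^2)^2 > 0"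
    using x by (intro divide_pos_pos mult_pos_pos) auto
  then show "\<exists>y. DERIV (gap_ratio e r) x :> y \<and> y > 0"
    using has_real_derivative_gap_ratio[OF x] by blast
qed

section \<open>Single crossing of the reduced welfare gap\<close>

text \<open>In the market model, with t = tau y, e = th/2 and the constants r, p1, p2 defined there,
  reduced_g is Ybar times the threshold function gfun at y, and reduced_gap is S_NN - S_RM
  when y = ystar.\<close>

definition reduced_g :: "real \<Rightarrow> real \<Rightarrow> real \<Rightarrow> real \<Rightarrow> real \<Rightarrow> real" where
  "reduced_g e r p1 p2 t = r*e*p1*t powr (2*e) / t^2 + p2 / (2*t)"

definition reduced_gap :: "real \<Rightarrow> real \<Rightarrow> real \<Rightarrow> real \<Rightarrow> real \<Rightarrow> real" where
  "reduced_gap e r p1 p2 t = p1*(1 - t powr (2*e)) + p2*(1-t) - reduced_g e r p1 p2 t * (1-t^2)"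

locale crossing =
  fixes e r p1 p2 :: real
  assumes e: "0 < e" "e < 1/2" and r: "0 < r" "r < 1" and p: "0 < p1" "0 < p2"
begin

abbreviation "g \<equiv> reduced_g e r p1 p2"
abbreviation "gap \<equiv> reduced_gap e r p1 p2"

lemma reduced_g_strict_antimono:
  assumes "0 < s" "s < t"
  shows "g t < g s"
proof -
  have g_eq: "g x = r*e*p1 * x powr (2*e-2) + p2 / (2*x)" if "x > 0" for x
    using that unfolding reduced_g_def by (simp add: powr_diff powr_numeral)
  have "t powr (2*e-2) < s powr (2*e-2)"
    using assms e by (intro powr_less_mono2_neg) auto
  then have "r*e*p1 * t powr (2*e-2) \<le> r*e*p1 * s powr (2*e-2)"
    using e r p by (intro mult_left_mono) auto
  moreover have "p2 / (2*t) < p2 / (2 * s)"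
    using assms p by (intro divide_strict_left_mono) auto
  ultimately show ?thesis
    using assms g_eq by simp
qed

lemma reduced_g_less_iff: "0 < s \<Longrightarrow> 0 < t \<Longrightarrow> g s < g t \<longleftrightarrow> t < s"
  using reduced_g_strict_antimono by (metis linorder_neq_iff order_less_asym)

lemma reduced_g_inj: "0 < s \<Longrightarrow> 0 < t \<Longrightarrow> g s = g t \<Longrightarrow> s = t"
  using reduced_g_less_iff by (metis linorder_neq_iff order_less_irrefl)

lemma reduced_g_1_less: "g 1 < e*p1 + p2/2"
  unfolding reduced_g_def using e r p by simp

lemma reduced_g_attains:
  assumes "b > g 1"
  obtains t where "0 < t" "t < 1" "g t = b"
proof -
  have "r*e*p1 > 0"
    using e r p by simp
  then have "g 1 > 0"
    unfolding reduced_g_def using p by simp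
  then have "b > 0" using assms by linarith
  define s where "s = min (1/2) (p2/(2*b))"
  have s: "0 < s" "s < 1" "s \<le> p2/(2*b)"
    using \<open>b > 0\<close> p unfolding s_def by auto
  have "b \<le> p2 / (2 * s)"
    using s \<open>b > 0\<close> by (simp add: field_simps)
  also have "\<dots> \<le> g s"
    unfolding reduced_g_def using s e r p by simp
  finally have "b \<le> g s" .
  moreover have "continuous_on {s..1} g"
    unfolding reduced_g_def using s by (intro continuous_intros) auto
  ultimately obtain t where t: "s \<le> t" "t \<le> 1" "g t = b"
    using IVT2'[of g 1 b s] assms s by auto
  with assms have "t \<noteq> 1" by auto
  with t s show thesis by (intro that) auto
qed

lemma reduced_gap_eq_gap_ratio:
  assumes "0 < t" "t < 1"
  shows "gap t = (1-t)^2 / (2*t) * (p1 * gap_ratio e r t - p2)"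
proof -
  have "1 - t \<noteq> 0" "t \<noteq> 0" using assms by auto
  then show ?thesis
    unfolding reduced_gap_def reduced_g_def gap_ratio_def
    by (simp add: field_simps) algebra
qed

lemma reduced_gap_pos_if_g_le:
  assumes "0 < t" "t < 1" "g t \<le> e*p1 + p2/2"
  shows "gap t > 0"
proof -
  have "(t^2) powr e * 1 powr (1-e) \<le> e * t^2 + (1-e) * 1"
    using assms e by (intro Youngs_inequality_0) auto
  moreover have "(t^2) powr e = t powr (2*e)"
    using assms by (simp add: powr_powr[symmetric] powr_numeral)
  ultimately have "p1 * (e * (1-t^2)) \<le> p1 * (1 - t powr (2*e))"
    using p by (intro mult_left_mono) (auto simp: algebra_simps)
  moreover have "g t * (1-t^2) \<le> (e*p1 + p2/2) * (1-t^2)"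
    using assms by (intro mult_right_mono) (auto simp: power_le_one)
  moreover have "p1 * (e * (1-t^2)) + p2*(1-t) - (e*p1 + p2/2) * (1-t^2) = p2 * (1-t)^2 / 2"
    by (simp add: field_simps power2_eq_square)
  moreover have "p2 * (1-t)^2 / 2 > 0"
    using assms p by simp
  ultimately show ?thesis
    unfolding reduced_gap_def by linarith
qed

lemma reduced_gap_neg_near_0:
  assumes "0 < t" "t \<le> p2 / (4 * (p1 + p2))"
  shows "gap t < 0"
proof -
  have "p2 / (4 * (p1 + p2)) \<le> 1/4"
    using p by (simp add: divide_simps)
  with assms have "t \<le> 1/4"
    by linarith
  with assms have "t^2 \<le> (1/4)^2"
    by (intro power_mono) auto
  then have "3/4 \<le> 1 - t^2"
    by (simp add: power_divide)
  moreover have "2 * (p1 + p2) \<le> p2 / (2*t)"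
    using assms p by (simp add: field_simps)
  moreover have "0 \<le> r*e*p1*t powr (2*e) / t^2"
    using e r p by simp
  ultimately have "2 * (p1 + p2) * (3/4) \<le> g t * (1-t^2)"
    unfolding reduced_g_def using p by (intro mult_mono) auto
  moreover have "p1 * (1 - t powr (2*e)) \<le> p1" "p2 * (1-t) \<le> p2"
    using assms p by auto
  moreover have "2 * (p1 + p2) * (3/4) = 3/2 * p1 + 3/2 * p2"
    by simp
  ultimately show ?thesis
    unfolding reduced_gap_def using p by linarith
qed

text \<open>gap t has the sign of p1 * gap_ratio e r t - p2, which is increasing in t.\<close>
lemma reduced_gap_pos_if_nonneg_left:
  assumes "0 < s" "s < t" "t < 1" "gap s \<ge> 0"
  shows "gap t > 0"
proof -
  have "(1-s)^2 / (2 * s) > 0" "(1-t)^2 / (2*t) > 0"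
    using assms by auto
  moreover have "p1 * gap_ratio e r s - p2 = gap s / ((1-s)^2 / (2 * s))"
    using reduced_gap_eq_gap_ratio[of s] calculation(1) assms by simp
  ultimately have "p1 * gap_ratio e r s - p2 \<ge> 0"
    using assms(1,4) by simp
  moreover have "p1 * gap_ratio e r s < p1 * gap_ratio e r t"
    using gap_ratio_strict_mono[OF e r assms(1-3)] p by simp
  ultimately show ?thesis
    using reduced_gap_eq_gap_ratio[of t] assms \<open>(1-t)^2 / (2*t) > 0\<close> by simp
qed

lemma reduced_gap_single_crossing:
  obtains t0 where "0 < t0" "t0 < 1" "g t0 > e*p1 + p2/2"
    "\<And>t. 0 < t \<Longrightarrow> t < t0 \<Longrightarrow> gap t < 0"
    "\<And>t. t0 < t \<Longrightarrow> t < 1 \<Longrightarrow> gap t > 0"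
proof -
  obtain tz where tz: "0 < tz" "tz < 1" "g tz = e*p1 + p2/2"
    using reduced_g_attains reduced_g_1_less by metis
  then have "gap tz > 0"
    by (intro reduced_gap_pos_if_g_le) auto
  define tl where "tl = min (tz/2) (p2 / (4 * (p1 + p2)))"
  have tl: "0 < tl" "tl < tz"
    using tz p unfolding tl_def by auto
  then have "gap tl < 0"
    by (intro reduced_gap_neg_near_0) (auto simp: tl_def)
  moreover have "continuous_on {tl..tz} gap"
    unfolding reduced_gap_def reduced_g_def using tl by (intro continuous_intros) auto
  ultimately obtain t0 where t0: "tl \<le> t0" "t0 \<le> tz" "gap t0 = 0"
    using IVT'[of gap tl 0 tz] \<open>gap tz > 0\<close> tl by fastforce
  with tl tz have "0 < t0" "t0 < 1" by auto
  show thesis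
  proof (rule that)
    show "0 < t0" "t0 < 1" by fact+
    show "gap t < 0" if "0 < t" "t < t0" for t
      using reduced_gap_pos_if_nonneg_left[of t t0] that \<open>t0 < 1\<close> t0 by force
    show "gap t > 0" if "t0 < t" "t < 1" for t
      using reduced_gap_pos_if_nonneg_left[of t0 t] that \<open>0 < t0\<close> t0 by simp
    show "g t0 > e*p1 + p2/2"
      using reduced_gap_pos_if_g_le[of t0] \<open>0 < t0\<close> \<open>t0 < 1\<close> t0 by force
  qed
qed

end

section \<open>The market model as a function of tau\<close>

lemma integral_powr_to_inf:
  fixes e s :: real
  assumes "e < -1" "s > 0"
  shows "integral {s..} (\<lambda>x. x powr e) = - (s powr (e+1)) / (e+1)"
  using has_integral_powr_to_inf[OF assms] by (rule integral_unique)

lemma Yf_eq: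
  assumes "bet > 2" "s > 0"
  shows "Yf bet s = s powr (2-bet) / (bet-2)"
proof -
  have "Yf bet s = - (s powr (1-bet+1)) / (1-bet+1)"
    unfolding Yf_def using assms by (intro integral_powr_to_inf) auto
  then show ?thesis
    by (simp add: minus_divide_right)
qed

lemma x0_pos: "gam > 2 \<Longrightarrow> x0 gam > 0"
  unfolding x0_def by simp

lemma y0_pos: "bet > 2 \<Longrightarrow> y0 bet > 0"
  unfolding y0_def by simp

lemma x0_powr_1_minus:
  assumes "gam > 2"
  shows "x0 gam powr (1-gam) = gam-1"
proof -
  have "1/(gam-1) * (1-gam) = -1"
    using assms by (simp add: divide_simps)
  then show ?thesis
    unfolding x0_def using assms by (simp add: powr_powr powr_minus)
qed

lemma x0_powr_integral:
  assumes "gam > 2" "c < gam - 1"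
  shows "integral {x0 gam..} (\<lambda>x. x powr (c - gam)) = x0 gam powr c * (gam-1) / (gam-1-c)"
proof -
  have "integral {x0 gam..} (\<lambda>x. x powr (c - gam))
          = - (x0 gam powr (c - gam + 1)) / (c - gam + 1)"
    using assms x0_pos[OF assms(1)] by (intro integral_powr_to_inf) auto
  also have "x0 gam powr (c - gam + 1) = x0 gam powr c * x0 gam powr (1 - gam)"
    unfolding powr_add[symmetric] by (simp add: algebra_simps)
  also have "\<dots> = x0 gam powr c * (gam-1)"
    using x0_powr_1_minus[OF assms(1)] by simp
  finally show ?thesis
    using assms by (simp add: field_simps)
qed

lemma Xbar_eq: "gam > 2 \<Longrightarrow> Xbar gam = x0 gam * (gam-1) / (gam-2)"
  using x0_powr_integral[of gam 1] x0_pos[of gam] unfolding Xbar_def by (simp add: algebra_simps)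

locale market =
  fixes gam bet lam th :: real
  assumes gam: "gam > 2" and bet: "bet > 2" and lam: "lam > 0" and th: "0 < th" "th < 1"
begin

abbreviation "Yb \<equiv> Ybar bet"

definition "moment = x0 gam powr th * (gam-1) / (gam-1-th)"
definition "r = (gam-1-th) / (gam-1)"
definition "p1 = moment * Yb powr th"
definition "p2 = lam * Xbar gam * Yb"

text \<open>tau y = sqrt (Yf bet y / Yb) (see Yf_eq_tau): the CP threshold enters welfare and g only
  through this quantity, which decreases from 1 to 0 as y runs from y0 bet to infinity.\<close>
definition "tau y = (y / y0 bet) powr ((2-bet) / 2)"

lemma y0_gt_0: "y0 bet > 0"
  using y0_pos bet .

lemma Yb_eq: "Yb = y0 bet powr (2-bet) / (bet-2)"
  unfolding Ybar_def using Yf_eq bet y0_pos by simp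

lemma Yb_pos: "Yb > 0"
  using Yb_eq bet y0_gt_0 by simp

lemma p1_pos: "p1 > 0"
  unfolding p1_def moment_def using x0_pos[OF gam] gam th Yb_pos by simp

lemma p2_pos: "p2 > 0"
  unfolding p2_def using Xbar_eq x0_pos gam lam Yb_pos by simp

lemma r_moment: "r * moment = x0 gam powr th"
  unfolding r_def moment_def using gam th by simp

sublocale crossing "th/2" r p1 p2
  using th gam p1_pos p2_pos by unfold_locales (auto simp: r_def)

lemma tau_pos: "y > 0 \<Longrightarrow> tau y > 0"
  unfolding tau_def using y0_gt_0 by simp

lemma tau_y0: "tau (y0 bet) = 1"
  unfolding tau_def using y0_gt_0 by simp

lemma tau_strict_antimono: "0 < s \<Longrightarrow> s < t \<Longrightarrow> tau t < tau s"
  unfolding tau_def using bet y0_gt_0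
  by (intro powr_less_mono2_neg) (auto simp: divide_strict_right_mono)

lemma Yf_eq_tau:
  assumes "y > 0"
  shows "Yf bet y = Yb * (tau y)^2"
proof -
  have "(tau y)^2 = (y / y0 bet) powr (2-bet)"
    unfolding tau_def using assms y0_gt_0 by (simp add: power2_eq_square powr_add[symmetric])
  then show ?thesis
    using Yf_eq[OF bet assms] Yb_eq y0_gt_0 assms by (simp add: powr_divide)
qed

lemma sqrt_Yb_Yf:
  assumes "y > 0"
  shows "sqrt (Yb * Yf bet y) = Yb * tau y"
proof -
  have "Yb * Yf bet y = (Yb * tau y)^2"
    using Yf_eq_tau[OF assms] by (simp add: power2_eq_square)
  then show ?thesis
    using Yb_pos tau_pos[OF assms] by simp
qed

lemma integral_scaled_powr:
  assumes "\<And>x. x > 0 \<Longrightarrow> f x = k * x powr (th - gam)"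
  shows "integral {x0 gam..} f = k * moment"
proof -
  have "integral {x0 gam..} f = integral {x0 gam..} (\<lambda>x. k * x powr (th - gam))"
    using assms x0_pos[OF gam] by (intro integral_cong) auto
  also have "\<dots> = k * moment"
    unfolding integral_mult_right moment_def using x0_powr_integral gam th by simp
  finally show ?thesis .
qed

lemma welfare_eq:
  assumes "y > 0"
  shows "welfare gam bet lam th a y = p1 * tau y powr th + p2 * tau y - a * Yb * (tau y)^2"
proof -
  let ?c = "Yb * tau y"
  have c: "?c > 0"
    using Yb_pos tau_pos[OF assms] by simp
  have "integral {x0 gam..} (\<lambda>x. phi th (x * ?c) * x powr (- gam)) = ?c powr th * moment"
    using c by (intro integral_scaled_powr) (simp add: phi_def powr_mult powr_add[symmetric])
  then show ?thesis
    unfolding welfare_def sqrt_Yb_Yf[OF assms] unfolding Yf_eq_tau[OF assms] p1_def p2_def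
    using Yb_pos tau_pos[OF assms] by (simp add: powr_mult algebra_simps)
qed

lemma gfun_eq:
  assumes "y > 0"
  shows "Yb * gfun gam bet lam th y = g (tau y)"
proof -
  let ?t = "tau y" and ?X = "x0 gam"
  define k where "k = (gam-2) / (gam-1)"
  let ?P = "?X powr th * Yb powr th * ?t powr th"
  have pos: "?t > 0" "?X > 0" "Yb > 0"
    using tau_pos[OF assms] x0_pos[OF gam] Yb_pos by auto
  have k: "k * Xbar gam = ?X"
    unfolding k_def using Xbar_eq[OF gam] gam by simp
  have "phi' th (?X * (Yb * ?t)) = th * ?P / (?X * Yb * ?t)"
    unfolding phi'_def using pos by (simp add: powr_diff powr_mult)
  moreover have "Xbar gam * sqrt Yb / sqrt (Yf bet y) = Xbar gam / ?t"
    using Yf_eq_tau[OF assms] pos by (simp add: real_sqrt_mult)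
  ultimately have "Yb * gfun gam bet lam th y
      = Yb * (1/2 * (k * (th * ?P / (?X * Yb * ?t)) + lam) * (Xbar gam / ?t))"
    unfolding gfun_def sqrt_Yb_Yf[OF assms] k_def by simp
  also have "\<dots> = (k * Xbar gam) * th * ?P / (2 * ?X * ?t^2) + p2 / (2 * ?t)"
    unfolding p2_def using pos by (simp add: field_simps power2_eq_square)
  also have "\<dots> = g ?t"
    unfolding k reduced_g_def p1_def r_moment[symmetric] using pos by (simp add: field_simps)
  finally show ?thesis .
qed

lemma zeta_eq: "Yb * zeta gam bet lam th = th/2 * p1 + p2/2"
proof -
  define F where "F = 1/2 * ((gam-2)/(gam-1) * phi' th (Yb * x0 gam) + lam) * Xbar gam"
  define S where "S = 1/2 * (integral {x0 gam..} (\<lambda>x. phi' th (x * Yb) * x powr (1 - gam))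
                              + lam * Xbar gam)"
  have "Yb * F = Yb * gfun gam bet lam th (y0 bet)"
    unfolding F_def gfun_def Ybar_def[symmetric] using Yb_pos by (simp add: mult.commute)
  also have "\<dots> = g 1"
    using gfun_eq[OF y0_gt_0] tau_y0 by simp
  finally have "Yb * F < th/2 * p1 + p2/2"
    using reduced_g_1_less by simp
  moreover have "integral {x0 gam..} (\<lambda>x. phi' th (x * Yb) * x powr (1 - gam))
                   = th * Yb powr (th-1) * moment"
    using Yb_pos by (intro integral_scaled_powr)
      (simp add: phi'_def powr_mult powr_add[symmetric] algebra_simps)
  then have "Yb * S = th/2 * p1 + p2/2"
    unfolding S_def p1_def p2_def using Yb_pos by (simp add: powr_diff field_simps)
  ultimately have "F < S"
    using Yb_pos by (metis mult_less_cancel_left_pos)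
  then show ?thesis
    unfolding zeta_def F_def[symmetric] S_def[symmetric] using \<open>Yb * S = _\<close> by simp
qed

lemma ystar_eq:
  assumes "0 < t" "t < 1" "Yb * a = g t"
  shows "ystar gam bet lam th a > 0" "tau (ystar gam bet lam th a) = t"
proof -
  define y where "y = y0 bet * t powr (2 / (2-bet))"
  have "y / y0 bet = t powr (2 / (2-bet))"
    unfolding y_def using y0_gt_0 by simp
  then have "tau y = t powr (2 / (2-bet) * ((2-bet) / 2))"
    unfolding tau_def by (simp only: powr_powr)
  also have "2 / (2-bet) * ((2-bet) / 2) = 1"
    using bet by simp
  finally have "tau y = t"
    using assms by simp
  have "1 < t powr (2 / (2-bet))"
    using powr_less_mono2_neg[of "2 / (2-bet)" t 1] assms bet by (simp add: divide_neg_pos)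
  then have "y0 bet < y"
    unfolding y_def using y0_gt_0 by simp
  have "Yb * gfun gam bet lam th y = Yb * a"
    using gfun_eq[of y] \<open>y0 bet < y\<close> y0_gt_0 \<open>tau y = t\<close> assms by simp
  then have "gfun gam bet lam th y = a"
    using Yb_pos by simp
  moreover have "y' = y" if "y0 bet \<le> y'" "gfun gam bet lam th y' = a" for y'
  proof -
    have "y' > 0"
      using that y0_gt_0 by linarith
    then have "tau y' = t"
      using reduced_g_inj[of "tau y'" t] gfun_eq[of y'] tau_pos that assms by simp
    with \<open>y' > 0\<close> \<open>y0 bet < y\<close> \<open>tau y = t\<close> show "y' = y"
      using tau_strict_antimono y0_gt_0 by (metis linorder_neq_iff order_less_irrefl order_less_trans)
  qed
  ultimately have "ystar gam bet lam th a = y"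
    unfolding ystar_def using \<open>y0 bet < y\<close> by (intro the_equality) auto
  then show "ystar gam bet lam th a > 0" "tau (ystar gam bet lam th a) = t"
    using \<open>y0 bet < y\<close> y0_gt_0 \<open>tau y = t\<close> by auto
qed

lemma S_NN_minus_S_RM:
  assumes "0 < t" "t < 1" "Yb * a = g t"
  shows "S_NN gam bet lam th a - S_RM gam bet lam th a = gap t"
proof -
  have "S_NN gam bet lam th a = p1 + p2 - a * Yb"
    unfolding S_NN_def using welfare_eq[OF y0_gt_0] tau_y0 by simp
  moreover have "S_RM gam bet lam th a = p1 * t powr th + p2 * t - a * Yb * t^2"
    unfolding S_RM_def using welfare_eq ystar_eq[OF assms] by simp
  ultimately show ?thesis
    unfolding reduced_gap_def assms(3)[symmetric] by (simp add: algebra_simps)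
qed

lemma welfare_threshold:
  obtains abar where "abar > zeta gam bet lam th"
    "\<And>a. zeta gam bet lam th < a \<Longrightarrow> a < abar \<Longrightarrow> S_NN gam bet lam th a > S_RM gam bet lam th a"
    "\<And>a. abar < a \<Longrightarrow> S_RM gam bet lam th a > S_NN gam bet lam th a"
proof -
  obtain t0 where t0: "0 < t0" "t0 < 1" "g t0 > th/2 * p1 + p2/2"
    and neg: "\<And>t. 0 < t \<Longrightarrow> t < t0 \<Longrightarrow> gap t < 0"
    and pos: "\<And>t. t0 < t \<Longrightarrow> t < 1 \<Longrightarrow> gap t > 0"
    using reduced_gap_single_crossing by blast
  define abar where "abar = g t0 / Yb"
  have abar: "Yb * abar = g t0"
    unfolding abar_def using Yb_pos by simp
  have "Yb * zeta gam bet lam th < Yb * abar"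
    using zeta_eq abar t0(3) by simp
  then have zeta_less: "zeta gam bet lam th < abar"
    using Yb_pos by simp
  have sign: "(a < abar \<longrightarrow> S_NN gam bet lam th a > S_RM gam bet lam th a) \<and>
                 (abar < a \<longrightarrow> S_RM gam bet lam th a > S_NN gam bet lam th a)"
    if "zeta gam bet lam th < a" for a
  proof -
    have "g 1 < Yb * a"
      using reduced_g_1_less zeta_eq mult_strict_left_mono[OF that Yb_pos] by simp
    then obtain t where t: "0 < t" "t < 1" "g t = Yb * a"
      using reduced_g_attains by blast
    have "a < abar \<longleftrightarrow> Yb * a < Yb * abar" "abar < a \<longleftrightarrow> Yb * abar < Yb * a"
      using Yb_pos by simp_all
    then have "a < abar \<longleftrightarrow> t0 < t" "abar < a \<longleftrightarrow> t < t0"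
      using reduced_g_less_iff[OF t(1) t0(1)] reduced_g_less_iff[OF t0(1) t(1)] t(3) abar
      by simp_all
    moreover have "S_NN gam bet lam th a - S_RM gam bet lam th a = gap t"
      using S_NN_minus_S_RM[OF t(1,2) t(3)[symmetric]] .
    ultimately show ?thesis
      using neg[OF t(1)] pos[OF _ t(2)] by (intro conjI impI) simp_all
  qed
  show thesis
  proof (rule that)
    show "zeta gam bet lam th < abar"
      by (fact zeta_less)
    show "S_NN gam bet lam th a > S_RM gam bet lam th a"
      if "zeta gam bet lam th < a" and "a < abar" for a
      using sign \<open>zeta gam bet lam th < a\<close> \<open>a < abar\<close> by simp
    show "S_RM gam bet lam th a > S_NN gam bet lam th a" if "abar < a" for a
      using sign zeta_less \<open>abar < a\<close> by simp
  qed
qed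

end

lemma ex1_threshold:
  fixes z c :: "'a :: dense_linorder"
  assumes "z < c"
    and below: "\<And>a. z < a \<Longrightarrow> a < c \<Longrightarrow> P a"
    and above: "\<And>a. c < a \<Longrightarrow> Q a"
    and disjoint: "\<And>a. P a \<Longrightarrow> Q a \<Longrightarrow> False"
  shows "\<exists>!b. z < b \<and> (\<forall>a. z < a \<and> a < b \<longrightarrow> P a) \<and> (\<forall>a. a > b \<longrightarrow> Q a)"
proof (rule ex1I[of _ c])
  show "z < c \<and> (\<forall>a. z < a \<and> a < c \<longrightarrow> P a) \<and> (\<forall>a. a > c \<longrightarrow> Q a)"
    using assms by simp
next
  fix b assume b: "z < b \<and> (\<forall>a. z < a \<and> a < b \<longrightarrow> P a) \<and> (\<forall>a. a > b \<longrightarrow> Q a)"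
  show "b = c"
  proof (rule linorder_cases[of b c])
    assume "b < c"
    then obtain a where a: "b < a" "a < c"
      using dense by blast
    with b have "z < a"
      using order.strict_trans by blast
    with a b below[of a] show ?thesis
      using disjoint by blast
  next
    assume "c < b"
    then obtain a where a: "c < a" "a < b"
      using dense by blast
    with \<open>z < c\<close> have "z < a"
      using order.strict_trans by blast
    with a b above[of a] show ?thesis
      using disjoint by blast
  qed
qed

theorem theorem5:
  fixes gam bet lam th :: real
  assumes "gam > 2" and "bet > 2" and "lam > 0" and "0 < th" and "th < 1"
  shows "\<exists>!abar. abar > zeta gam bet lam th \<and>
           (\<forall>a. zeta gam bet lam th < a \<and> a < abar \<longrightarrow>
                S_NN gam bet lam th a > S_RM gam bet lam th a) \<and>
           (\<forall>a. a > abar \<longrightarrow> S_RM gam bet lam th a > S_NN gam bet lam th a)"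
proof -
  interpret market gam bet lam th
    using assms by unfold_locales
  obtain abar where "abar > zeta gam bet lam th"
    "\<And>a. zeta gam bet lam th < a \<Longrightarrow> a < abar \<Longrightarrow> S_NN gam bet lam th a > S_RM gam bet lam th a"
    "\<And>a. abar < a \<Longrightarrow> S_RM gam bet lam th a > S_NN gam bet lam th a"
    using welfare_threshold by blast
  moreover have "\<And>a. S_NN gam bet lam th a > S_RM gam bet lam th a \<Longrightarrow>
                    S_RM gam bet lam th a > S_NN gam bet lam th a \<Longrightarrow> False"
    by simp
  ultimately show ?thesis
    by (rule ex1_threshold)
qed

end
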